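(* Let $\alpha,\beta$ be fixed nonzero real numbers. There exist constants $C,N>0$, independent of $n$ and of the point set, such that for every $n>N$ and every set $P\subset\mathbb R^2$ of $n$ points, $$|\Pi_{\alpha,\beta}(P)|\le C n^2 .$$
   Context: For a finite set $P\subset\mathbb R^2$ and real numbers $\alpha,\beta$, define the set of ordered triples $$\Pi_{\alpha,\beta}(P)=\{(p,q,r)\in P\times P\times P:\ p\cdot q=\alpha \text{ and } p\cdot r=\beta\},$$ where $\cdot$ is the standard dot product on $\mathbb R^2$ (the points $p,q,r$ need not be distinct). *)

theory Defs
  imports "HOL-Analysis.Analysis"
begin

definition Pi_ab :: "real \<Rightarrow> real \<Rightarrow> (real^2) set \<Rightarrow> ((real^2) \<times> (real^2) \<times> (real^2)) set" where
  "Pi_ab \<alpha> \<beta> P = {(p, q, r). p \<in> P \<and> q \<in> P \<and> r \<in> P \<and> p \<bullet> q = \<alpha> \<and> p \<bullet> r = \<beta>}"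

end

theory Submission
  imports Defs
begin

text \<open>If \<open>\<alpha> r = \<beta> q\<close> then \<open>r\<close> is determined by \<open>q\<close>, so at most \<open>n\<^sup>2\<close> triples
  come from the pairs \<open>(p, q)\<close>. Otherwise \<open>q\<close> and \<open>r\<close> are linearly independent, and
  the two linear equations \<open>p \<bullet> q = \<alpha>\<close>, \<open>p \<bullet> r = \<beta>\<close> determine \<open>p\<close>, so at most
  \<open>n\<^sup>2\<close> triples come from the pairs \<open>(q, r)\<close>. Hence \<open>|\<Pi>\<^sub>\<alpha>\<^sub>,\<^sub>\<beta>(P)| \<le> 2n\<^sup>2\<close>.\<close>

lemma inner_vec2: "(x::real^2) \<bullet> y = x$1 * y$1 + x$2 * y$2"
  by (simp add: inner_vec_def sum_2)

lemma orthogonal_nonzero_imp_det2_eq_0: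
  fixes d q r :: "real^2"
  assumes "d \<noteq> 0" "d \<bullet> q = 0" "d \<bullet> r = 0"
  shows "q$1 * r$2 - q$2 * r$1 = 0"
proof -
  have "d$1 * (q$1 * r$2 - q$2 * r$1) = (d \<bullet> q) * r$2 - (d \<bullet> r) * q$2"
       "d$2 * (q$1 * r$2 - q$2 * r$1) = (d \<bullet> r) * q$1 - (d \<bullet> q) * r$1"
    by (simp_all add: inner_vec2 algebra_simps)
  moreover have "d$1 \<noteq> 0 \<or> d$2 \<noteq> 0"
    using assms(1) by (metis vec_eq_iff exhaust_2 zero_index)
  ultimately show ?thesis using assms(2,3) by auto
qed

lemma det2_eq_0_imp_inner_scaleR_eq:
  fixes p q r :: "real^2"
  assumes "q$1 * r$2 - q$2 * r$1 = 0"
  shows "(p \<bullet> q) *\<^sub>R r = (p \<bullet> r) *\<^sub>R q"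
proof -
  have "(p \<bullet> q) * r$1 - (p \<bullet> r) * q$1 = - p$2 * (q$1 * r$2 - q$2 * r$1)"
       "(p \<bullet> q) * r$2 - (p \<bullet> r) * q$2 = p$1 * (q$1 * r$2 - q$2 * r$1)"
    by (simp_all add: inner_vec2 algebra_simps)
  then show ?thesis
    using assms by (simp add: vec_eq_iff forall_2)
qed

lemma inner_eq_pair_imp_parallel:
  fixes p p' q r :: "real^2"
  assumes "p \<noteq> p'" "p \<bullet> q = p' \<bullet> q" "p \<bullet> r = p' \<bullet> r"
  shows "(p \<bullet> q) *\<^sub>R r = (p \<bullet> r) *\<^sub>R q"
proof -
  have "(p - p') \<bullet> q = 0" "(p - p') \<bullet> r = 0"
    using assms(2,3) by (simp_all add: inner_diff_left)
  with assms(1) have "q$1 * r$2 - q$2 * r$1 = 0"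
    by (intro orthogonal_nonzero_imp_det2_eq_0) auto
  then show ?thesis by (rule det2_eq_0_imp_inner_scaleR_eq)
qed

lemma card_Pi_ab_le:
  fixes P :: "(real^2) set"
  assumes "\<alpha> \<noteq> 0" "finite P"
  shows "card (Pi_ab \<alpha> \<beta> P) \<le> 2 * (card P)^2"
proof -
  define A where "A = {(p, q, r) \<in> Pi_ab \<alpha> \<beta> P. \<alpha> *\<^sub>R r = \<beta> *\<^sub>R q}"
  define B where "B = Pi_ab \<alpha> \<beta> P - A"
  have card_PP: "card (P \<times> P) = (card P)^2"
    by (simp add: card_cartesian_product power2_eq_square)
  have "inj_on (\<lambda>(p, q, r). (p, q)) A"
  proof (rule inj_onI, clarsimp)
    fix p q r r'
    assume "(p, q, r) \<in> A" "(p, q, r') \<in> A"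
    then have "\<alpha> *\<^sub>R r = \<alpha> *\<^sub>R r'" unfolding A_def by auto
    then show "r = r'" using assms(1) by simp
  qed
  moreover have "(\<lambda>(p, q, r). (p, q)) ` A \<subseteq> P \<times> P"
    unfolding A_def Pi_ab_def by auto
  ultimately have card_A: "card A \<le> (card P)^2"
    using card_inj_on_le assms(2) card_PP by (metis finite_SigmaI)
  have "inj_on (\<lambda>(p, q, r). (q, r)) B"
  proof (rule inj_onI, clarsimp, rule ccontr)
    fix p p' q r
    assume "(p, q, r) \<in> B" "(p', q, r) \<in> B" "p \<noteq> p'"
    then have "p \<bullet> q = \<alpha>" "p \<bullet> r = \<beta>" "p' \<bullet> q = \<alpha>" "p' \<bullet> r = \<beta>" "\<alpha> *\<^sub>R r \<noteq> \<beta> *\<^sub>R q"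
      unfolding A_def B_def Pi_ab_def by auto
    with \<open>p \<noteq> p'\<close> show False
      using inner_eq_pair_imp_parallel[of p p' q r] by simp
  qed
  moreover have "(\<lambda>(p, q, r). (q, r)) ` B \<subseteq> P \<times> P"
    unfolding B_def Pi_ab_def by auto
  ultimately have card_B: "card B \<le> (card P)^2"
    using card_inj_on_le assms(2) card_PP by (metis finite_SigmaI)
  have "Pi_ab \<alpha> \<beta> P = A \<union> B"
    unfolding B_def A_def by auto
  then have "card (Pi_ab \<alpha> \<beta> P) \<le> card A + card B"
    by (simp add: card_Un_le)
  with card_A card_B show ?thesis by linarith
qed

theorem theorem1:
  fixes \<alpha> \<beta> :: real
  assumes "\<alpha> \<noteq> 0" and "\<beta> \<noteq> 0"
  shows "\<exists>C::real. \<exists>N::real. C > 0 \<and> N > 0 \<and>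
           (\<forall>n::nat. \<forall>P :: (real^2) set.
              real n > N \<longrightarrow> finite P \<longrightarrow> card P = n \<longrightarrow>
              real (card (Pi_ab \<alpha> \<beta> P)) \<le> C * (real n)^2)"
proof (intro exI[of _ 2] exI[of _ 1] conjI allI impI)
  fix n :: nat and P :: "(real^2) set"
  assume "finite P" "card P = n"
  then have "card (Pi_ab \<alpha> \<beta> P) \<le> 2 * n^2"
    using card_Pi_ab_le assms(1) by blast
  then show "real (card (Pi_ab \<alpha> \<beta> P)) \<le> 2 * (real n)^2"
    by (metis of_nat_le_iff of_nat_mult of_nat_numeral of_nat_power)
qed auto

end
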